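(* Let $T>0$. There is a constant $C$ such that for any two $\mathbf{u},\mathbf{w}\in C([0,T];X)$, all $t\in[0,T]$ and $\mathbf{x}\in\Omega$, $$|\mathcal{L}^\epsilon[\mathbf{u}](t,\mathbf{x})-\mathcal{L}^\epsilon[\mathbf{w}](t,\mathbf{x})|\le C\,\|\mathbf{u}-\mathbf{w}\|_{C([0,T];X)}\int_\Omega\frac{\rho^\epsilon(\mathbf{y},\mathbf{x})}{|\mathbf{y}-\mathbf{x}|}\,d\mathbf{y},$$ where $C$ is independent of $\mathbf{u}$ and $\mathbf{w}$.
   Context: Let $d\in\{2,3\}$ and let $\Omega\subset\mathbb{R}^d$ be a bounded domain. Fix a horizon $\epsilon>0$, a length $L>0$ and a bond stiffness $\overline{\mu}>0$. Let $\omega_d$ be the volume of the unit ball and $V_d^\epsilon=\omega_d\epsilon^d$. Let $J:[0,\infty)\to[0,\infty)$ be positive and radially decreasing on $[0,1)$ with $J(0)=M$ and $J(r)=0$ for $r\ge1$; $J^\epsilon(s)=J(s/\epsilon)$; the kernel is $\rho^\epsilon(\mathbf{y},\mathbf{x})=\chi_\Omega(\mathbf{y})J^\epsilon(|\mathbf{y}-\mathbf{x}|)/(\epsilon V_d^\epsilon)$. For a time-dependent displacement $\mathbf{u}$ and $\mathbf{y}\ne\mathbf{x}$, $\mathbf{e}=(\mathbf{y}-\mathbf{x})/|\mathbf{y}-\mathbf{x}|$, $S(\mathbf{y},\mathbf{x},\mathbf{u}(t))=(\mathbf{u}(t,\mathbf{y})-\mathbf{u}(t,\mathbf{x}))\cdot\mathbf{e}/|\mathbf{y}-\mathbf{x}|$,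 $S^*(t,\mathbf{y},\mathbf{x},\mathbf{u})=\max_{0\le\tau\le t}S(\mathbf{y},\mathbf{x},\mathbf{u}(\tau))$, $r^*=\sqrt{|\mathbf{y}-\mathbf{x}|/L}\,S^*$. The failure envelope is $g'$ for a convex–concave potential $g$ with $0<r^L\le r^C<r^F$: $g'(r)=\overline{\mu}r$ for $r\le r^L$, nonlinear beyond $r^L$ (hardening up to $r^C$), decreasing to $0$ at $r^F$ and $g'=0$ for $r\ge r^F$ (e.g. bilinear: $g'(r)=\overline{\mu}r$ for $r<r^C$, $\overline{\mu}r^C\frac{r^F-r}{r^F-r^C}$ on $[r^C,r^F]$, $0$ beyond). The two-point phase field is $\gamma(\mathbf{u})(\mathbf{y},\mathbf{x},t)=g'(r^* )/(\overline{\mu}r^* )\in[0,1]$ ($=1$ if $r^*\le r^L$). The stiffness is $\mu(\gamma)=\overline{\mu}$ if $S(\mathbf{y},\mathbf{x},\mathbf{u}(t))\le0$ and $\overline{\mu}\gamma(\mathbf{u})(\mathbf{y},\mathbf{x},t)$ if $S>0$. The bond force is $\boldsymbol{f}^\epsilon(t,\mathbf{y},\mathbf{x},\mathbf{u})=\rho^\epsilon(\mathbf{y},\mathbf{x})\mu(\gamma(\mathbf{u})(\mathbf{y},\mathbf{x},t))S(\mathbf{y},\mathbf{x},\mathbf{u}(t))\mathbf{e}$ and $\mathcal{L}^\epsilon[\mathbf{u}](t,\mathbf{x})=-\int_\Omega\boldsymbol{f}^\epsilon(t,\mathbf{y},\mathbf{x},\mathbf{u})\,d\mathbf{y}$. $X$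 is the subspace of $L^\infty(\Omega;\mathbb{R}^d)$ $L^2$-orthogonal to the rigid motions $\{\mathbb{Q}\mathbf{x}+\mathbf{c}:\mathbb{Q}^T=-\mathbb{Q}\}$, and $C([0,T];X)$ has norm $\sup_t\|\mathbf{u}(t)\|_{L^\infty}$.
   Formalization: The failure envelope $g'$ is moreover Lipschitz continuous on $[0,\infty)$, with one constant for all its arguments. The statement above fails without it. *)

theory Defs
  imports "HOL-Analysis.Analysis"
begin

definition bondS :: "'a::euclidean_space \<Rightarrow> 'a \<Rightarrow> ('a \<Rightarrow> 'a) \<Rightarrow> real" where
  "bondS y x v = inner (v y - v x) (sgn (y - x)) / norm (y - x)"

definition Sstar :: "real \<Rightarrow> 'a::euclidean_space \<Rightarrow> 'a \<Rightarrow> (real \<Rightarrow> 'a \<Rightarrow> 'a) \<Rightarrow> real" where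
  "Sstar t y x u = (SUP \<tau>\<in>{0..t}. bondS y x (u \<tau>))"

definition rstar :: "real \<Rightarrow> real \<Rightarrow> 'a::euclidean_space \<Rightarrow> 'a \<Rightarrow> (real \<Rightarrow> 'a \<Rightarrow> 'a) \<Rightarrow> real" where
  "rstar L t y x u = sqrt (norm (y - x) / L) * Sstar t y x u"

definition phase :: "(real \<Rightarrow> real) \<Rightarrow> real \<Rightarrow> real \<Rightarrow> real \<Rightarrow> (real \<Rightarrow> 'a::euclidean_space \<Rightarrow> 'a) \<Rightarrow> 'a \<Rightarrow> 'a \<Rightarrow> real \<Rightarrow> real" where
  "phase gp mu rL L u y x t =
     (let r = rstar L t y x u in if r \<le> rL then 1 else gp r / (mu * r))"

definition stiff :: "(real \<Rightarrow> real) \<Rightarrow> real \<Rightarrow> real \<Rightarrow> real \<Rightarrow> (real \<Rightarrow> 'a::euclidean_space \<Rightarrow> 'a) \<Rightarrow> 'a \<Rightarrow> 'a \<Rightarrow> real \<Rightarrow> real" where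
  "stiff gp mu rL L u y x t =
     (if bondS y x (u t) \<le> 0 then mu else mu * phase gp mu rL L u y x t)"

definition rho :: "'a::euclidean_space set \<Rightarrow> (real \<Rightarrow> real) \<Rightarrow> real \<Rightarrow> 'a \<Rightarrow> 'a \<Rightarrow> real" where
  "rho \<Omega> J \<epsilon> y x = indicator \<Omega> y * J (norm (y - x) / \<epsilon>)
      / (\<epsilon> * (measure lborel (ball (0::'a) 1) * \<epsilon> ^ DIM('a)))"

definition force :: "'a::euclidean_space set \<Rightarrow> (real \<Rightarrow> real) \<Rightarrow> real \<Rightarrow> (real \<Rightarrow> real) \<Rightarrow> real \<Rightarrow> real \<Rightarrow> real
     \<Rightarrow> real \<Rightarrow> 'a \<Rightarrow> 'a \<Rightarrow> (real \<Rightarrow> 'a \<Rightarrow> 'a) \<Rightarrow> 'a" where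
  "force \<Omega> J \<epsilon> gp mu rL L t y x u =
     (rho \<Omega> J \<epsilon> y x * stiff gp mu rL L u y x t * bondS y x (u t)) *\<^sub>R sgn (y - x)"

definition Leps :: "'a::euclidean_space set \<Rightarrow> (real \<Rightarrow> real) \<Rightarrow> real \<Rightarrow> (real \<Rightarrow> real) \<Rightarrow> real \<Rightarrow> real \<Rightarrow> real
     \<Rightarrow> (real \<Rightarrow> 'a \<Rightarrow> 'a) \<Rightarrow> real \<Rightarrow> 'a \<Rightarrow> 'a" where
  "Leps \<Omega> J \<epsilon> gp mu rL L u t x =
     - set_lebesgue_integral lebesgue \<Omega> (\<lambda>y. force \<Omega> J \<epsilon> gp mu rL L t y x u)"

definition rigid_motions :: "('a::euclidean_space \<Rightarrow> 'a) set" where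
  "rigid_motions = {(\<lambda>x. Q x + c) | Q c. linear Q \<and> (\<forall>x y. inner (Q x) y = - inner x (Q y))}"

definition in_X :: "'a::euclidean_space set \<Rightarrow> ('a \<Rightarrow> 'a) \<Rightarrow> bool" where
  "in_X \<Omega> v \<longleftrightarrow> set_borel_measurable lebesgue \<Omega> v \<and> bounded (v ` \<Omega>) \<and>
     (\<forall>r\<in>rigid_motions. set_lebesgue_integral lebesgue \<Omega> (\<lambda>x. inner (v x) (r x)) = 0)"

definition in_CX :: "'a::euclidean_space set \<Rightarrow> real \<Rightarrow> (real \<Rightarrow> 'a \<Rightarrow> 'a) \<Rightarrow> bool" where
  "in_CX \<Omega> T u \<longleftrightarrow> (\<forall>t\<in>{0..T}. in_X \<Omega> (u t)) \<and>
     (\<forall>t\<in>{0..T}. \<forall>e>0. \<exists>\<delta>>0. \<forall>s\<in>{0..T}. \<bar>s - t\<bar> < \<delta> \<longrightarrow> (\<forall>x\<in>\<Omega>. norm (u s x - u t x) \<le> e))"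

definition CXnorm :: "'a::euclidean_space set \<Rightarrow> real \<Rightarrow> (real \<Rightarrow> 'a \<Rightarrow> 'a) \<Rightarrow> real" where
  "CXnorm \<Omega> T u = (SUP t\<in>{0..T}. SUP x\<in>\<Omega>. norm (u t x))"

end

theory Submission
  imports Defs
begin

text \<open>The bond force is rho(y,x) times the scalar response mu(gamma) S, and for a stretched bond
  mu gamma is the secant modulus g'(r^*)/r^* of the history maximum. Because g' is Lipschitz
  and bounded by mu r, this response is Lipschitz in the pair (S, S^*) with constants mu and
  K + mu, while S and S^* both move by at most 2 |u - w|/|y - x| between two displacement
  fields. Integrating against rho gives the estimate: the integral of rho/|y - x| is finite in
  dimension at least 2 by a dyadic decomposition of the ball, and S^* is measurable in y
  because, by continuity in time, the maximum may be taken over rational times only.\<close>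

lemma dyadic_bracket:
  fixes q :: real
  assumes "1 \<le> q"
  obtains k :: nat where "2 ^ k \<le> q" "q < 2 ^ (k + 1)"
proof -
  define k where "k = nat \<lfloor>log 2 q\<rfloor>"
  have "0 \<le> log 2 q" using assms by simp
  then have "real k \<le> log 2 q" "log 2 q < real (k + 1)"
    unfolding k_def by linarith+
  then have "2 powr real k \<le> q" "q < 2 powr real (k + 1)"
    using assms by (simp_all only: le_log_iff log_less_iff)
  then show ?thesis
    by (intro that) (simp_all only: powr_realpow zero_less_numeral)
qed

lemma emeasure_lborel_cball_eq:
  fixes x :: "'a::euclidean_space"
  assumes "0 \<le> r"
  shows "emeasure lborel (cball x r) = ennreal (r ^ DIM('a) * measure lborel (ball (0::'a) 1))"
proof -
  have "emeasure lborel (cball x r) = ennreal (measure lborel (cball x r))"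
    using emeasure_lborel_cball_finite[of x r] by (intro emeasure_eq_ennreal_measure) auto
  also have "measure lborel (cball x r) = r ^ DIM('a) * measure lborel (ball (0::'a) 1)"
    using content_cball_conv_ball content_ball_conv_unit_ball assms by metis
  finally show ?thesis .
qed

lemma nn_integral_cmult_cball:
  fixes x :: "'a::euclidean_space"
  assumes "0 \<le> c" "0 \<le> r"
  shows "(\<integral>\<^sup>+y. ennreal c * indicator (cball x r) y \<partial>lborel)
    = ennreal (c * (r ^ DIM('a) * measure lborel (ball (0::'a) 1)))"
  using assms by (simp add: nn_integral_cmult_indicator emeasure_lborel_cball_eq ennreal_mult)

lemma dyadic_shell_term_le:
  fixes r V :: real and k d :: nat
  assumes "0 < r" "0 \<le> V" "2 \<le> d"
  shows "2 ^ (k + 1) / r * ((r / 2 ^ k) ^ d * V) \<le> 2 * r ^ (d - 1) * V * (1 / 2) ^ k"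
proof -
  have "(2::real) ^ k * 2 ^ k = (2 ^ k) ^ 2" by (simp add: power2_eq_square)
  also have "\<dots> \<le> (2 ^ k) ^ d" using assms by (intro power_increasing) auto
  finally have "r ^ d / (2 ^ k) ^ d \<le> r ^ d / (2 ^ k * 2 ^ k)"
    by (intro divide_left_mono) (use assms in auto)
  then have "2 ^ (k + 1) / r * ((r / 2 ^ k) ^ d * V) \<le> 2 ^ (k + 1) / r * (r ^ d / (2 ^ k * 2 ^ k) * V)"
    using assms by (intro mult_left_mono mult_right_mono) (auto simp: power_divide)
  also have "\<dots> = 2 * r ^ (d - 1) * V * (1 / 2) ^ k"
    using assms by (cases d) (auto simp: field_simps)
  finally show ?thesis .
qed

lemma inverse_norm_le_dyadic_sum:
  fixes x y :: "'a::real_normed_vector"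
  assumes r: "0 < r"
  shows "ennreal (indicator (cball x r) y / norm (y - x))
    \<le> (\<Sum>k. ennreal (2 ^ (k + 1) / r) * indicator (cball x (r / 2 ^ k)) y)"
proof (cases "y \<in> cball x r \<and> y \<noteq> x")
  case True
  define a where "a = norm (y - x)"
  have a: "0 < a" "a \<le> r"
    using True unfolding a_def by (auto simp: dist_norm norm_minus_commute)
  obtain k :: nat where k: "2 ^ k \<le> r / a" "r / a < 2 ^ (k + 1)"
    using dyadic_bracket[of "r / a"] a by auto
  have "y \<in> cball x (r / 2 ^ k)"
    using k(1) a by (simp add: a_def dist_norm norm_minus_commute field_simps)
  moreover have "1 / a < 2 ^ (k + 1) / r" using k(2) a r by (simp add: field_simps)
  ultimately have "ennreal (indicator (cball x r) y / norm (y - x))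
      \<le> ennreal (2 ^ (k + 1) / r) * indicator (cball x (r / 2 ^ k)) y"
    using True a unfolding a_def[symmetric] by (auto simp: indicator_def intro!: ennreal_leI)
  also have "\<dots> \<le> (\<Sum>k. ennreal (2 ^ (k + 1) / r) * indicator (cball x (r / 2 ^ k)) y)"
    by (rule order_trans[OF _ sum_le_suminf[OF summableI, where I = "{k}"]])
      (auto simp del: sum_mult_indicator)
  finally show ?thesis .
qed (auto simp: indicator_def)

lemma integrable_inverse_norm_cball:
  fixes x :: "'a::euclidean_space"
  assumes "2 \<le> DIM('a)"
  shows "integrable lborel (\<lambda>y. indicator (cball x r) y / norm (y - x))"
proof (cases "0 < r")
  case False
  then have "y \<in> cball x r \<Longrightarrow> y = x" for y
    by (metis dist_le_zero_iff mem_cball not_less order_trans)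
  then have "(\<lambda>y. indicator (cball x r) y / norm (y - x)) = (\<lambda>_. 0)"
    by (fastforce simp: indicator_def)
  then show ?thesis by simp
next
  case r: True
  define V where "V = measure lborel (ball (0::'a) 1)"
  have V: "0 \<le> V" unfolding V_def by simp
  define f where "f k = (\<lambda>y. ennreal (2 ^ (k + 1) / r) * indicator (cball x (r / 2 ^ k)) y)"
    for k :: nat
  have [measurable]: "cball x s \<in> sets borel" for s by simp
  have f_meas: "f k \<in> borel_measurable lborel" for k unfolding f_def by measurable
  have dominated: "ennreal (norm (indicator (cball x r) y / norm (y - x))) \<le> (\<Sum>k. f k y)" for y
    using inverse_norm_le_dyadic_sum[OF r, of x y] by (simp add: f_def)
  have "(\<integral>\<^sup>+y. ennreal (norm (indicator (cball x r) y / norm (y - x))) \<partial>lborel) \<le> (\<integral>\<^sup>+y. (\<Sum>k. f k y) \<partial>lborel)"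
    by (intro nn_integral_mono dominated)
  also have "\<dots> = (\<Sum>k. integral\<^sup>N lborel (f k))" by (rule nn_integral_suminf[OF f_meas])
  also have "\<dots> = (\<Sum>k. ennreal (2 ^ (k + 1) / r * ((r / 2 ^ k) ^ DIM('a) * V)))"
    using r by (intro suminf_cong) (simp add: f_def V_def nn_integral_cmult_cball)
  also have "\<dots> \<le> (\<Sum>k. ennreal (2 * r ^ (DIM('a) - 1) * V * (1 / 2) ^ k))"
    by (intro suminf_le summableI ennreal_leI dyadic_shell_term_le r V assms)
  also have "\<dots> = ennreal (\<Sum>k. 2 * r ^ (DIM('a) - 1) * V * (1 / 2) ^ k)"
    by (intro suminf_ennreal2) (use r V in \<open>auto intro!: summable_mult summable_geometric\<close>)
  also have "\<dots> < \<infinity>" by simp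
  finally show ?thesis
    by (intro integrableI_bounded) measurable
qed

lemma uniform_bound_of_locally_uniform_bound:
  fixes f :: "'a::metric_space \<Rightarrow> 'b \<Rightarrow> real"
  assumes "compact K"
    and local: "\<And>t. t \<in> K \<Longrightarrow> \<exists>d>0. \<exists>B. \<forall>s\<in>K. dist s t < d \<longrightarrow> (\<forall>x\<in>X. f s x \<le> B)"
  shows "\<exists>B. \<forall>t\<in>K. \<forall>x\<in>X. f t x \<le> B"
proof -
  obtain d B where dB: "\<And>t. t \<in> K \<Longrightarrow> 0 < d t \<and> (\<forall>s\<in>K. dist s t < d t \<longrightarrow> (\<forall>x\<in>X. f s x \<le> B t))"
    using local by metis
  have "K \<subseteq> (\<Union>t\<in>K. ball t (d t))" using dB by force
  then obtain C where C: "C \<subseteq> K" "finite C" "K \<subseteq> (\<Union>c\<in>C. ball c (d c))"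
    using compactE_image[OF \<open>compact K\<close>, of K "\<lambda>t. ball t (d t)"] by auto
  have "f s x \<le> (\<Sum>c\<in>C. \<bar>B c\<bar>)" if "s \<in> K" "x \<in> X" for s x
  proof -
    obtain c where c: "c \<in> C" "dist s c < d c"
      using C \<open>s \<in> K\<close> by (auto simp: dist_commute)
    then have "f s x \<le> \<bar>B c\<bar>" using dB C that by fastforce
    also have "\<dots> \<le> (\<Sum>c\<in>C. \<bar>B c\<bar>)" by (rule member_le_sum) (use c C in auto)
    finally show ?thesis .
  qed
  then show ?thesis by blast
qed

lemma cSUP_eq_cSUP_dense_subset:
  fixes f :: "'a::metric_space \<Rightarrow> real"
  assumes "continuous_on A f" "D \<subseteq> A" "A \<subseteq> closure D" "D \<noteq> {}" "bdd_above (f ` A)"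
  shows "(SUP x\<in>A. f x) = (SUP x\<in>D. f x)"
proof (rule antisym)
  have bdd_D: "bdd_above (f ` D)" using assms(2,5) by (meson bdd_above_mono image_mono)
  show "(SUP x\<in>A. f x) \<le> (SUP x\<in>D. f x)"
  proof (rule cSUP_least)
    show "A \<noteq> {}" using assms(2,4) by blast
  next
    fix x assume "x \<in> A"
    then obtain s where s: "\<And>n. s n \<in> D" "s \<longlonglongrightarrow> x"
      using assms(3) closure_sequential by blast
    then have "(f \<circ> s) \<longlonglongrightarrow> f x"
      using assms(1,2) \<open>x \<in> A\<close> continuous_on_sequentially by blast
    moreover have "(f \<circ> s) n \<le> (SUP x\<in>D. f x)" for n
      using s(1) bdd_D by (simp add: cSUP_upper)
    ultimately show "f x \<le> (SUP x\<in>D. f x)" by (intro LIMSEQ_le_const2) auto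
  qed
qed (use assms in \<open>auto intro: cSUP_subset_mono\<close>)

lemma abs_cSUP_diff_le:
  fixes f g :: "'a \<Rightarrow> real"
  assumes "A \<noteq> {}" "bdd_above (f ` A)" "bdd_above (g ` A)" "\<And>x. x \<in> A \<Longrightarrow> \<bar>f x - g x\<bar> \<le> c"
  shows "\<bar>(SUP x\<in>A. f x) - (SUP x\<in>A. g x)\<bar> \<le> c"
proof -
  have "f x \<le> (SUP x\<in>A. g x) + c" "g x \<le> (SUP x\<in>A. f x) + c" if "x \<in> A" for x
    using assms(4)[OF that] cSUP_upper[OF that assms(2)] cSUP_upper[OF that assms(3)] by linarith+
  then have "(SUP x\<in>A. f x) \<le> (SUP x\<in>A. g x) + c" "(SUP x\<in>A. g x) \<le> (SUP x\<in>A. f x) + c"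
    using assms(1) by (blast intro: cSUP_least)+
  then show ?thesis by linarith
qed

definition secant_modulus :: "(real \<Rightarrow> real) \<Rightarrow> real \<Rightarrow> real" where
  "secant_modulus g r = g r / r"

lemma secant_modulus_bounds:
  assumes "0 < r" "0 \<le> g r" "g r \<le> mu * r"
  shows "0 \<le> secant_modulus g r" "secant_modulus g r \<le> mu"
  using assms by (auto simp: secant_modulus_def pos_divide_le_eq)

lemma abs_secant_modulus_diff_le:
  assumes lip: "K-lipschitz_on {0..} g" and "0 < r" "0 < s" "0 \<le> g r" "g r \<le> mu * r"
  shows "\<bar>secant_modulus g r - secant_modulus g s\<bar> * s \<le> (K + mu) * \<bar>r - s\<bar>"
proof -
  note bounds = secant_modulus_bounds[of r g mu, OF assms(2,4,5)]
  have "(secant_modulus g r - secant_modulus g s) * s = (g r - g s) + secant_modulus g r * (s - r)"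
    using assms(2,3) by (simp add: secant_modulus_def field_simps)
  then have "\<bar>secant_modulus g r - secant_modulus g s\<bar> * s
      = \<bar>(g r - g s) + secant_modulus g r * (s - r)\<bar>"
    using assms(3) by (metis abs_mult abs_of_pos)
  also have "\<dots> \<le> \<bar>g r - g s\<bar> + secant_modulus g r * \<bar>r - s\<bar>"
    using abs_triangle_ineq[of "g r - g s" "secant_modulus g r * (s - r)"] bounds
    by (simp add: abs_mult abs_minus_commute)
  also have "\<dots> \<le> K * \<bar>r - s\<bar> + mu * \<bar>r - s\<bar>"
    using lipschitz_onD[OF lip, of r s] bounds assms(2,3)
    by (intro add_mono mult_right_mono) (auto simp: dist_real_def)
  finally show ?thesis by (simp add: distrib_right)
qed

\<comment> \<open>Abstract bond response: compressed bonds (S <= 0) have stiffness mu, stretched ones the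
  secant modulus phi of the history maximum P >= S.\<close>
lemma abs_bond_response_diff_le:
  fixes \<phi> :: "real \<Rightarrow> real"
  assumes \<phi>_bounds: "\<And>r. 0 < r \<Longrightarrow> 0 \<le> \<phi> r \<and> \<phi> r \<le> mu"
    and \<phi>_diff: "\<And>r s. 0 < r \<Longrightarrow> 0 < s \<Longrightarrow> \<bar>\<phi> r - \<phi> s\<bar> * s \<le> M * \<bar>r - s\<bar>"
    and "S1 \<le> P1" "S2 \<le> P2"
  shows "\<bar>(if S1 \<le> 0 then mu else \<phi> P1) * S1 - (if S2 \<le> 0 then mu else \<phi> P2) * S2\<bar>
      \<le> mu * \<bar>S1 - S2\<bar> + M * \<bar>P1 - P2\<bar>"
proof -
  have "\<bar>\<phi> 1 - \<phi> 2\<bar> * 2 \<le> M" using \<phi>_diff[of 1 2] by simp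
  then have M: "0 \<le> M * \<bar>P1 - P2\<bar>" by (smt (verit) abs_ge_zero mult_nonneg_nonneg)
  have mixed: "\<bar>mu * S - \<phi> P * S'\<bar> \<le> mu * \<bar>S - S'\<bar>" if "S \<le> 0" "0 < S'" "S' \<le> P" for S S' P
  proof -
    have "0 \<le> \<phi> P" "\<phi> P \<le> mu" using \<phi>_bounds[of P] that by auto
    then have "0 \<le> \<phi> P * S'" "\<phi> P * S' \<le> mu * S'" "mu * S \<le> 0"
      using that by (auto intro: mult_right_mono simp: mult_nonneg_nonpos)
    moreover have "mu * \<bar>S - S'\<bar> = mu * S' - mu * S" using that by (simp add: right_diff_distrib)
    ultimately show ?thesis by linarith
  qed
  consider "S1 \<le> 0" "S2 \<le> 0" | "S1 \<le> 0" "0 < S2" | "0 < S1" "S2 \<le> 0" | "0 < S1" "0 < S2"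
    by linarith
  then show ?thesis
  proof cases
    case 1
    have "0 \<le> mu" using \<phi>_bounds[of 1] by simp
    then have "\<bar>mu * S1 - mu * S2\<bar> = mu * \<bar>S1 - S2\<bar>"
      by (simp add: right_diff_distrib[symmetric] abs_mult)
    then show ?thesis using 1 M by simp
  next
    case 2
    then show ?thesis using mixed[of S1 S2 P2] M assms by simp
  next
    case 3
    then show ?thesis using mixed[of S2 S1 P1] M assms by (simp add: abs_minus_commute)
  next
    case 4
    have \<phi>1: "0 \<le> \<phi> P1" "\<phi> P1 \<le> mu" using \<phi>_bounds[of P1] 4 assms by auto
    have "\<phi> P1 * S1 - \<phi> P2 * S2 = \<phi> P1 * (S1 - S2) + (\<phi> P1 - \<phi> P2) * S2"
      by (simp add: algebra_simps)
    then have "\<bar>\<phi> P1 * S1 - \<phi> P2 * S2\<bar> \<le> \<phi> P1 * \<bar>S1 - S2\<bar> + \<bar>\<phi> P1 - \<phi> P2\<bar> * S2"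
      using abs_triangle_ineq[of "\<phi> P1 * (S1 - S2)" "(\<phi> P1 - \<phi> P2) * S2"] \<phi>1 4
      by (simp add: abs_mult)
    also have "\<dots> \<le> mu * \<bar>S1 - S2\<bar> + \<bar>\<phi> P1 - \<phi> P2\<bar> * P2"
      using \<phi>1 assms by (intro add_mono mult_right_mono mult_left_mono) auto
    also have "\<dots> \<le> mu * \<bar>S1 - S2\<bar> + M * \<bar>P1 - P2\<bar>"
      using \<phi>_diff[of P1 P2] 4 assms by simp
    finally show ?thesis using 4 by simp
  qed
qed

lemma in_CX_bounded:
  assumes "in_CX \<Omega> T u"
  obtains B where "\<forall>t\<in>{0..T}. \<forall>x\<in>\<Omega>. norm (u t x) \<le> B"
proof -
  have "\<exists>d>0. \<exists>B. \<forall>s\<in>{0..T}. dist s t < d \<longrightarrow> (\<forall>x\<in>\<Omega>. norm (u s x) \<le> B)"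
    if t: "t \<in> {0..T}" for t
  proof -
    have "bounded (u t ` \<Omega>)" using assms t unfolding in_CX_def in_X_def by auto
    then obtain M where M: "\<forall>x\<in>\<Omega>. norm (u t x) \<le> M" unfolding bounded_iff by auto
    obtain d where d: "0 < d" "\<forall>s\<in>{0..T}. \<bar>s - t\<bar> < d \<longrightarrow> (\<forall>x\<in>\<Omega>. norm (u s x - u t x) \<le> 1)"
      using assms t unfolding in_CX_def by (meson zero_less_one)
    have "norm (u s x) \<le> M + 1" if "s \<in> {0..T}" "dist s t < d" "x \<in> \<Omega>" for s x
      using norm_triangle_sub[of "u s x" "u t x"] M d that by (fastforce simp: dist_real_def)
    then show ?thesis using d by blast
  qed
  then show ?thesis
    using uniform_bound_of_locally_uniform_bound[of "{0..T}" \<Omega> "\<lambda>t x. norm (u t x)"] that by auto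
qed

lemma norm_le_CXnorm:
  assumes bound: "\<forall>s\<in>{0..T}. \<forall>z\<in>\<Omega>. norm (v s z) \<le> B" and "t \<in> {0..T}" "x \<in> \<Omega>"
  shows "norm (v t x) \<le> CXnorm \<Omega> T v"
proof -
  have inner: "bdd_above ((\<lambda>z. norm (v s z)) ` \<Omega>)" if "s \<in> {0..T}" for s
    using bound that by (intro bdd_aboveI2[of _ _ B]) auto
  have outer: "bdd_above ((\<lambda>s. SUP z\<in>\<Omega>. norm (v s z)) ` {0..T})"
    using bound \<open>x \<in> \<Omega>\<close> by (intro bdd_aboveI2[of _ _ B] cSUP_least) auto
  have "norm (v t x) \<le> (SUP z\<in>\<Omega>. norm (v t z))"
    using assms inner by (intro cSUP_upper) auto
  also have "\<dots> \<le> CXnorm \<Omega> T v"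
    unfolding CXnorm_def using assms outer by (intro cSUP_upper) auto
  finally show ?thesis .
qed

lemma bondS_self [simp]: "bondS x x v = 0"
  by (simp add: bondS_def)

lemma bondS_diff: "bondS y x v - bondS y x w = bondS y x (\<lambda>z. v z - w z)"
  unfolding bondS_def by (simp add: inner_diff_left diff_divide_distrib)

lemma abs_bondS_le: "\<bar>bondS y x v\<bar> \<le> norm (v y - v x) / norm (y - x)"
proof -
  have "\<bar>inner (v y - v x) (sgn (y - x))\<bar> \<le> norm (v y - v x) * norm (sgn (y - x))"
    by (rule Cauchy_Schwarz_ineq2)
  also have "\<dots> \<le> norm (v y - v x)" by (simp add: norm_sgn)
  finally show ?thesis unfolding bondS_def by (simp add: divide_right_mono)
qed

lemma abs_bondS_diff_le:
  assumes "norm (v y - w y) \<le> D" "norm (v x - w x) \<le> D"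
  shows "\<bar>bondS y x v - bondS y x w\<bar> \<le> 2 * D / norm (y - x)"
proof -
  have "norm ((v y - w y) - (v x - w x)) \<le> 2 * D"
    using norm_triangle_ineq4[of "v y - w y" "v x - w x"] assms by simp
  then show ?thesis
    unfolding bondS_diff using abs_bondS_le[of y x "\<lambda>z. v z - w z"]
    by (smt (verit) divide_right_mono norm_ge_zero)
qed

lemma abs_bondS_le_bound:
  assumes "norm (v y) \<le> B" "norm (v x) \<le> B"
  shows "\<bar>bondS y x v\<bar> \<le> 2 * B / norm (y - x)"
  using abs_bondS_diff_le[of v y "\<lambda>_. 0" B x] assms by (simp add: bondS_def)

lemma continuous_on_bondS_history:
  assumes u: "in_CX \<Omega> T u" and "y \<in> \<Omega>" "x \<in> \<Omega>"
  shows "continuous_on {0..T} (\<lambda>\<tau>. bondS y x (u \<tau>))"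
proof (cases "y = x")
  case False
  then have a: "0 < norm (y - x)" by simp
  show ?thesis
    unfolding continuous_on_iff
  proof (intro ballI allI impI)
    fix \<tau> e :: real assume \<tau>: "\<tau> \<in> {0..T}" and e: "0 < e"
    then obtain d where d: "0 < d"
      "\<forall>s\<in>{0..T}. \<bar>s - \<tau>\<bar> < d \<longrightarrow> (\<forall>z\<in>\<Omega>. norm (u s z - u \<tau> z) \<le> e * norm (y - x) / 4)"
      using u a unfolding in_CX_def by (metis divide_pos_pos mult_pos_pos zero_less_numeral)
    have "dist (bondS y x (u s)) (bondS y x (u \<tau>)) < e" if "s \<in> {0..T}" "dist s \<tau> < d" for s
    proof -
      have "dist (bondS y x (u s)) (bondS y x (u \<tau>)) \<le> 2 * (e * norm (y - x) / 4) / norm (y - x)"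
        unfolding dist_real_def using d that assms
        by (intro abs_bondS_diff_le) (auto simp: dist_real_def)
      also have "\<dots> < e" using a e by (simp add: field_simps)
      finally show ?thesis .
    qed
    then show "\<exists>d>0. \<forall>s\<in>{0..T}. dist s \<tau> < d \<longrightarrow> dist (bondS y x (u s)) (bondS y x (u \<tau>)) < e"
      using d(1) by blast
  qed
qed simp

lemma bdd_above_bondS_history:
  assumes "in_CX \<Omega> T u" "y \<in> \<Omega>" "x \<in> \<Omega>" "t \<le> T"
  shows "bdd_above ((\<lambda>\<tau>. bondS y x (u \<tau>)) ` {0..t})"
proof -
  have "continuous_on {0..t} (\<lambda>\<tau>. bondS y x (u \<tau>))"
    using assms(4) by (intro continuous_on_subset[OF continuous_on_bondS_history[OF assms(1-3)]]) auto
  then show ?thesis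
    by (intro bounded_imp_bdd_above compact_imp_bounded compact_continuous_image) auto
qed

lemma bondS_le_Sstar:
  assumes "in_CX \<Omega> T u" "y \<in> \<Omega>" "x \<in> \<Omega>" "t \<in> {0..T}"
  shows "bondS y x (u t) \<le> Sstar t y x u"
  unfolding Sstar_def using assms bdd_above_bondS_history[OF assms(1-3)] by (intro cSUP_upper) auto

lemma abs_Sstar_diff_le:
  assumes u: "in_CX \<Omega> T u" and w: "in_CX \<Omega> T w" and "y \<in> \<Omega>" "x \<in> \<Omega>" "t \<in> {0..T}"
    and diff: "\<forall>\<tau>\<in>{0..T}. \<forall>z\<in>\<Omega>. norm (u \<tau> z - w \<tau> z) \<le> D"
  shows "\<bar>Sstar t y x u - Sstar t y x w\<bar> \<le> 2 * D / norm (y - x)"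
  unfolding Sstar_def using assms
  by (intro abs_cSUP_diff_le bdd_above_bondS_history[OF u] bdd_above_bondS_history[OF w]
      abs_bondS_diff_le) auto

lemma Sstar_eq_SUP_rational_times:
  assumes u: "in_CX \<Omega> T u" and "y \<in> \<Omega>" "x \<in> \<Omega>" "t \<in> {0..T}"
  shows "Sstar t y x u = (SUP \<tau>\<in>insert t ({0..t} \<inter> \<rat>). bondS y x (u \<tau>))"
proof -
  have dense: "{0..t} \<subseteq> closure (insert t ({0..t} \<inter> \<rat>))"
  proof (cases "t = 0")
    case False
    then have "closure ({0..t} \<inter> \<rat>) = closure {0..t}"
      using assms(4) by (intro closure_convex_Int_superset) (auto simp: Rats_closure_real)
    then show ?thesis by (metis closure_closed closed_atLeastAtMost closure_mono subset_insertI)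
  qed (simp add: closure_insert)
  show ?thesis
    unfolding Sstar_def using assms dense
    by (intro cSUP_eq_cSUP_dense_subset bdd_above_bondS_history[OF u]
        continuous_on_subset[OF continuous_on_bondS_history[OF u]]) auto
qed

lemma measurable_restrict_space_ident:
  "(\<lambda>y. y) \<in> borel_measurable (restrict_space lebesgue \<Omega>)"
  by (intro measurable_restrict_space1 measurable_completion) simp

lemma in_X_measurable:
  assumes "\<Omega> \<in> sets lebesgue" "in_X \<Omega> v"
  shows "v \<in> borel_measurable (restrict_space lebesgue \<Omega>)"
  using assms unfolding in_X_def set_borel_measurable_def
  by (subst borel_measurable_restrict_space_iff) auto

lemma bondS_measurable:
  assumes "v \<in> borel_measurable (restrict_space lebesgue \<Omega>)"
  shows "(\<lambda>y. bondS y x v) \<in> borel_measurable (restrict_space lebesgue \<Omega>)"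
  using assms measurable_restrict_space_ident unfolding bondS_def by measurable

lemma Sstar_measurable:
  assumes "\<Omega> \<in> sets lebesgue" and u: "in_CX \<Omega> T u" and "x \<in> \<Omega>" "t \<in> {0..T}"
  shows "(\<lambda>y. Sstar t y x u) \<in> borel_measurable (restrict_space lebesgue \<Omega>)"
proof -
  define D where "D = insert t ({0..t} \<inter> \<rat>)"
  have D: "countable D" "D \<subseteq> {0..t}" "D \<subseteq> {0..T}"
    using assms(4) unfolding D_def by (auto simp: countable_rat)
  have "(\<lambda>y. SUP \<tau>\<in>D. bondS y x (u \<tau>)) \<in> borel_measurable (restrict_space lebesgue \<Omega>)"
  proof (rule borel_measurable_cSUP[OF D(1)])
    show "(\<lambda>y. bondS y x (u \<tau>)) \<in> borel_measurable (restrict_space lebesgue \<Omega>)" if "\<tau> \<in> D" for \<tau>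
      using that D assms u by (intro bondS_measurable in_X_measurable) (auto simp: in_CX_def)
    show "bdd_above ((\<lambda>\<tau>. bondS y x (u \<tau>)) ` D)" if "y \<in> space (restrict_space lebesgue \<Omega>)" for y
    proof -
      have "y \<in> \<Omega>" using that by simp
      then have "bdd_above ((\<lambda>\<tau>. bondS y x (u \<tau>)) ` {0..t})"
        using assms by (intro bdd_above_bondS_history[OF u]) auto
      then show ?thesis using D(2) by (meson bdd_above_mono image_mono)
    qed
  qed
  then show ?thesis
    by (rule measurable_cong[THEN iffD1, rotated])
      (use Sstar_eq_SUP_rational_times[OF u _ assms(3,4)] in \<open>auto simp: D_def\<close>)
qed

locale bond_model =
  fixes \<Omega> :: "'a::euclidean_space set" and J :: "real \<Rightarrow> real" and \<epsilon> :: real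
    and gp :: "real \<Rightarrow> real" and mu rL L K :: real
  assumes domain_measurable: "\<Omega> \<in> sets lebesgue"
    and horizon_pos: "0 < \<epsilon>" and length_pos: "0 < L" and mu_pos: "0 < mu" and rL_pos: "0 < rL"
    and J_nonneg: "\<And>r. 0 \<le> r \<Longrightarrow> 0 \<le> J r"
    and J_antimono: "antimono_on {0..} J"
    and J_vanishes: "\<And>r. 1 \<le> r \<Longrightarrow> J r = 0"
    and gp_linear: "\<And>r. 0 \<le> r \<Longrightarrow> r \<le> rL \<Longrightarrow> gp r = mu * r"
    and gp_bounds: "\<And>r. 0 \<le> r \<Longrightarrow> 0 \<le> gp r \<and> gp r \<le> mu * r"
    and gp_lipschitz: "K-lipschitz_on {0..} gp"
begin

lemma set_integral_eq_integral_restrict: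
  fixes f :: "'a \<Rightarrow> 'b::{banach, second_countable_topology}"
  shows "set_lebesgue_integral lebesgue \<Omega> f = integral\<^sup>L (restrict_space lebesgue \<Omega>) f"
  unfolding set_lebesgue_integral_def
  by (rule integral_restrict_space[symmetric]) (simp add: domain_measurable)

lemma rho_nonneg: "0 \<le> rho \<Omega> J \<epsilon> y x"
  using horizon_pos J_nonneg[of "norm (y - x) / \<epsilon>"] by (simp add: rho_def)

lemma rho_le: "rho \<Omega> J \<epsilon> y x
    \<le> J 0 / (\<epsilon> * (measure lborel (ball (0::'a) 1) * \<epsilon> ^ DIM('a))) * indicator (cball x \<epsilon>) y"
proof -
  have "indicator \<Omega> y * J (norm (y - x) / \<epsilon>) \<le> J 0 * indicator (cball x \<epsilon>) y"
  proof (cases "norm (y - x) \<le> \<epsilon>")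
    case True
    then have "J (norm (y - x) / \<epsilon>) \<le> J 0"
      using horizon_pos by (intro monotone_onD[OF J_antimono]) auto
    then show ?thesis
      using True J_nonneg[of "norm (y - x) / \<epsilon>"] horizon_pos
      by (auto simp: indicator_def dist_norm norm_minus_commute)
  next
    case False
    then have "J (norm (y - x) / \<epsilon>) = 0" using horizon_pos by (intro J_vanishes) simp
    then show ?thesis using J_nonneg[of 0] by (simp add: indicator_def)
  qed
  then show ?thesis
    unfolding rho_def using horizon_pos by (simp add: divide_right_mono)
qed

lemma rho_measurable: "(\<lambda>y. rho \<Omega> J \<epsilon> y x) \<in> borel_measurable (restrict_space lebesgue \<Omega>)"
proof -
  have "mono (\<lambda>r. - J (max r 0))"
    by (intro monoI) (auto intro!: monotone_onD[OF J_antimono])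
  then have "(\<lambda>r. - (- J (max r 0))) \<in> borel_measurable borel"
    using borel_measurable_mono by measurable
  then have [measurable]: "(\<lambda>r. J (max r 0)) \<in> borel_measurable borel" by simp
  have "\<Omega> \<in> sets (restrict_space lebesgue \<Omega>)"
    using domain_measurable by (simp add: sets_restrict_space_iff)
  note [measurable] = this measurable_restrict_space_ident
  have "rho \<Omega> J \<epsilon> y x = indicator \<Omega> y * J (max (norm (y - x) / \<epsilon>) 0)
      / (\<epsilon> * (measure lborel (ball (0::'a) 1) * \<epsilon> ^ DIM('a)))" for y
    using horizon_pos by (simp add: rho_def)
  then show ?thesis by simp
qed

lemma integrable_rho_div_norm:
  assumes "2 \<le> DIM('a)"
  shows "integrable (restrict_space lebesgue \<Omega>) (\<lambda>y. rho \<Omega> J \<epsilon> y x / norm (y - x))"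
proof -
  define c where "c = J 0 / (\<epsilon> * (measure lborel (ball (0::'a) 1) * \<epsilon> ^ DIM('a)))"
  define g where "g y = c * (indicator (cball x \<epsilon>) y / norm (y - x))" for y
  have [measurable]: "cball x \<epsilon> \<in> sets borel" by simp
  have "integrable lborel g"
    unfolding g_def by (intro integrable_mult_right integrable_inverse_norm_cball assms)
  then have "integrable lebesgue g"
    by (intro integrable_completion[THEN iffD2]) (simp_all add: g_def)
  then have g: "integrable (restrict_space lebesgue \<Omega>) g"
    using domain_measurable by (intro integrable_restrict_space[THEN iffD2] integrable_mult_indicator) auto
  note [measurable] = rho_measurable measurable_restrict_space_ident
  show ?thesis
  proof (rule Bochner_Integration.integrable_bound[OF g])
    show "AE y in restrict_space lebesgue \<Omega>. norm (rho \<Omega> J \<epsilon> y x / norm (y - x)) \<le> norm (g y)"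
    proof (rule AE_I2)
      fix y
      have "norm (rho \<Omega> J \<epsilon> y x / norm (y - x)) = rho \<Omega> J \<epsilon> y x / norm (y - x)"
        using rho_nonneg by simp
      also have "\<dots> \<le> g y"
        using divide_right_mono[OF rho_le[unfolded c_def[symmetric]], of "norm (y - x)"]
        by (simp add: g_def)
      finally show "norm (rho \<Omega> J \<epsilon> y x / norm (y - x)) \<le> norm (g y)" by simp
    qed
  qed measurable
qed

lemma stiff_bounds: "0 \<le> stiff gp mu rL L u y x t \<and> stiff gp mu rL L u y x t \<le> mu"
proof -
  define r where "r = rstar L t y x u"
  have "0 \<le> gp r / (mu * r) \<and> gp r / (mu * r) \<le> 1" if "rL < r"
    using that rL_pos mu_pos gp_bounds[of r] by (auto simp: divide_le_eq)
  then have "0 \<le> phase gp mu rL L u y x t \<and> phase gp mu rL L u y x t \<le> 1"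
    unfolding phase_def r_def[symmetric] Let_def by auto
  then show ?thesis
    using mu_pos unfolding stiff_def by (auto simp: mult_le_cancel_left1)
qed

\<comment> \<open>mu times the phase field is the secant modulus g'(r^*)/r^*, also on the linear branch
  r^* <= rL.\<close>
lemma stiff_mult_bondS_eq:
  assumes "y \<noteq> x" "bondS y x (u t) \<le> Sstar t y x u"
  shows "stiff gp mu rL L u y x t * bondS y x (u t)
    = (if bondS y x (u t) \<le> 0 then mu
       else secant_modulus gp (sqrt (norm (y - x) / L) * Sstar t y x u)) * bondS y x (u t)"
proof (cases "bondS y x (u t) \<le> 0")
  case False
  define r where "r = sqrt (norm (y - x) / L) * Sstar t y x u"
  have "0 < r" unfolding r_def using assms False length_pos by simp
  then have "mu * (if r \<le> rL then 1 else gp r / (mu * r)) = secant_modulus gp r"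
    using mu_pos gp_linear[of r] by (simp add: secant_modulus_def)
  then show ?thesis
    using False unfolding stiff_def phase_def rstar_def Let_def r_def by simp
qed (simp add: stiff_def)

lemma force_measurable:
  assumes u: "in_CX \<Omega> T u" and "x \<in> \<Omega>" "t \<in> {0..T}"
  shows "(\<lambda>y. force \<Omega> J \<epsilon> gp mu rL L t y x u) \<in> borel_measurable (restrict_space lebesgue \<Omega>)"
proof -
  have "continuous_on {0..} gp" using gp_lipschitz by (rule lipschitz_on_continuous_on)
  then have "continuous_on UNIV (\<lambda>r. gp (max r 0))"
    by (rule continuous_on_compose2) (intro continuous_intros, auto)
  then have [measurable]: "(\<lambda>r. gp (max r 0)) \<in> borel_measurable borel"
    by (rule borel_measurable_continuous_onI)
  have "u t \<in> borel_measurable (restrict_space lebesgue \<Omega>)"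
    using u assms domain_measurable by (intro in_X_measurable) (auto simp: in_CX_def)
  note [measurable] = measurable_restrict_space_ident rho_measurable bondS_measurable[OF this]
    Sstar_measurable[OF domain_measurable u assms(2,3)]
  have "(if r \<le> rL then 1 else gp r / (mu * r)) = (if r \<le> rL then 1 else gp (max r 0) / (mu * r))"
    for r
    using rL_pos by simp
  then have "force \<Omega> J \<epsilon> gp mu rL L t y x u =
     (rho \<Omega> J \<epsilon> y x * (if bondS y x (u t) \<le> 0 then mu else mu *
        (if sqrt (norm (y - x) / L) * Sstar t y x u \<le> rL then 1
         else gp (max (sqrt (norm (y - x) / L) * Sstar t y x u) 0)
           / (mu * (sqrt (norm (y - x) / L) * Sstar t y x u))))
      * bondS y x (u t)) *\<^sub>R sgn (y - x)" for y
    unfolding force_def stiff_def phase_def rstar_def Let_def by presburger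
  then show ?thesis by simp
qed

lemma integrable_force:
  assumes "2 \<le> DIM('a)" and u: "in_CX \<Omega> T u" and "x \<in> \<Omega>" "t \<in> {0..T}"
  shows "integrable (restrict_space lebesgue \<Omega>) (\<lambda>y. force \<Omega> J \<epsilon> gp mu rL L t y x u)"
proof -
  have "bounded (u t ` \<Omega>)" using u assms(4) unfolding in_CX_def in_X_def by auto
  then obtain B where B: "\<forall>z\<in>\<Omega>. norm (u t z) \<le> B" unfolding bounded_iff by auto
  show ?thesis
  proof (rule Bochner_Integration.integrable_bound)
    show "integrable (restrict_space lebesgue \<Omega>) (\<lambda>y. 2 * mu * B * (rho \<Omega> J \<epsilon> y x / norm (y - x)))"
      by (intro integrable_mult_right integrable_rho_div_norm assms(1))
    show "AE y in restrict_space lebesgue \<Omega>.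
        norm (force \<Omega> J \<epsilon> gp mu rL L t y x u) \<le> norm (2 * mu * B * (rho \<Omega> J \<epsilon> y x / norm (y - x)))"
    proof (rule AE_I2)
      fix y assume "y \<in> space (restrict_space lebesgue \<Omega>)"
      then have "\<bar>bondS y x (u t)\<bar> \<le> 2 * B / norm (y - x)"
        using B assms(3) by (intro abs_bondS_le_bound) auto
      then have "stiff gp mu rL L u y x t * \<bar>bondS y x (u t)\<bar> \<le> mu * (2 * B / norm (y - x))"
        using stiff_bounds mu_pos by (intro mult_mono) auto
      then have "rho \<Omega> J \<epsilon> y x * (stiff gp mu rL L u y x t * \<bar>bondS y x (u t)\<bar>)
          \<le> rho \<Omega> J \<epsilon> y x * (mu * (2 * B / norm (y - x)))"
        using rho_nonneg by (rule mult_left_mono)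
      moreover have "norm (force \<Omega> J \<epsilon> gp mu rL L t y x u)
          \<le> rho \<Omega> J \<epsilon> y x * (stiff gp mu rL L u y x t * \<bar>bondS y x (u t)\<bar>)"
        using rho_nonneg[of y x] stiff_bounds[of u y x t]
        by (simp add: force_def norm_sgn abs_mult mult.assoc)
      ultimately have "norm (force \<Omega> J \<epsilon> gp mu rL L t y x u)
          \<le> 2 * mu * B * (rho \<Omega> J \<epsilon> y x / norm (y - x))"
        by (simp add: mult_ac)
      then show "norm (force \<Omega> J \<epsilon> gp mu rL L t y x u)
          \<le> norm (2 * mu * B * (rho \<Omega> J \<epsilon> y x / norm (y - x)))"
        by (rule order_trans) (simp only: real_norm_def abs_ge_self)
    qed
  qed (rule force_measurable[OF u assms(3,4)])
qed

lemma norm_force_diff_le: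
  assumes u: "in_CX \<Omega> T u" and w: "in_CX \<Omega> T w" and "y \<in> \<Omega>" "x \<in> \<Omega>" "t \<in> {0..T}"
    and diff: "\<forall>\<tau>\<in>{0..T}. \<forall>z\<in>\<Omega>. norm (u \<tau> z - w \<tau> z) \<le> D"
  shows "norm (force \<Omega> J \<epsilon> gp mu rL L t y x u - force \<Omega> J \<epsilon> gp mu rL L t y x w)
    \<le> 2 * (2 * mu + K) * D * (rho \<Omega> J \<epsilon> y x / norm (y - x))"
proof (cases "y = x")
  case False
  define c where "c = sqrt (norm (y - x) / L)"
  define \<phi> where "\<phi> P = secant_modulus gp (c * P)" for P
  define F where "F v = stiff gp mu rL L v y x t * bondS y x (v t)" for v
  have c: "0 < c" unfolding c_def using False length_pos by simp
  have \<phi>_bounds: "0 \<le> \<phi> P \<and> \<phi> P \<le> mu" if "0 < P" for P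
    using secant_modulus_bounds[of "c * P" gp mu] gp_bounds[of "c * P"] c that
    by (simp add: \<phi>_def)
  have \<phi>_diff: "\<bar>\<phi> P - \<phi> Q\<bar> * Q \<le> (K + mu) * \<bar>P - Q\<bar>" if "0 < P" "0 < Q" for P Q
  proof -
    have "\<bar>\<phi> P - \<phi> Q\<bar> * (c * Q) \<le> (K + mu) * \<bar>c * P - c * Q\<bar>"
      unfolding \<phi>_def using c that gp_bounds[of "c * P"]
      by (intro abs_secant_modulus_diff_le gp_lipschitz) auto
    then show ?thesis
      using c by (simp add: right_diff_distrib[symmetric] abs_mult mult.left_commute)
  qed
  have F_eq: "F v = (if bondS y x (v t) \<le> 0 then mu else \<phi> (Sstar t y x v)) * bondS y x (v t)"
    if "in_CX \<Omega> T v" for v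
    unfolding F_def \<phi>_def c_def
    by (rule stiff_mult_bondS_eq[OF False bondS_le_Sstar[OF that assms(3-5)]])
  have "\<bar>F u - F w\<bar> \<le> mu * \<bar>bondS y x (u t) - bondS y x (w t)\<bar>
      + (K + mu) * \<bar>Sstar t y x u - Sstar t y x w\<bar>"
    unfolding F_eq[OF u] F_eq[OF w]
    by (rule abs_bond_response_diff_le[OF \<phi>_bounds \<phi>_diff bondS_le_Sstar[OF u assms(3-5)]
        bondS_le_Sstar[OF w assms(3-5)]])
  also have "\<dots> \<le> mu * (2 * D / norm (y - x)) + (K + mu) * (2 * D / norm (y - x))"
    using diff assms(3-5) mu_pos lipschitz_on_nonneg[OF gp_lipschitz]
    by (intro add_mono mult_left_mono abs_bondS_diff_le abs_Sstar_diff_le[OF u w]) auto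
  also have "\<dots> = 2 * (2 * mu + K) * D / norm (y - x)"
    by (simp add: add_divide_distrib[symmetric] algebra_simps)
  finally have F: "\<bar>F u - F w\<bar> \<le> 2 * (2 * mu + K) * D / norm (y - x)" .
  have "force \<Omega> J \<epsilon> gp mu rL L t y x u - force \<Omega> J \<epsilon> gp mu rL L t y x w
      = (rho \<Omega> J \<epsilon> y x * (F u - F w)) *\<^sub>R sgn (y - x)"
    by (simp add: force_def F_def algebra_simps)
  then have "norm (force \<Omega> J \<epsilon> gp mu rL L t y x u - force \<Omega> J \<epsilon> gp mu rL L t y x w)
      = rho \<Omega> J \<epsilon> y x * \<bar>F u - F w\<bar>"
    using False rho_nonneg[of y x] by (simp add: norm_sgn abs_mult)
  also have "\<dots> \<le> rho \<Omega> J \<epsilon> y x * (2 * (2 * mu + K) * D / norm (y - x))"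
    using F rho_nonneg by (rule mult_left_mono)
  finally show ?thesis by (simp add: mult_ac)
qed (simp add: force_def)

lemma norm_Leps_diff_le:
  assumes "2 \<le> DIM('a)" and u: "in_CX \<Omega> T u" and w: "in_CX \<Omega> T w" and "x \<in> \<Omega>" "t \<in> {0..T}"
    and diff: "\<forall>\<tau>\<in>{0..T}. \<forall>z\<in>\<Omega>. norm (u \<tau> z - w \<tau> z) \<le> D"
  shows "norm (Leps \<Omega> J \<epsilon> gp mu rL L u t x - Leps \<Omega> J \<epsilon> gp mu rL L w t x)
    \<le> 2 * (2 * mu + K) * D * set_lebesgue_integral lebesgue \<Omega> (\<lambda>y. rho \<Omega> J \<epsilon> y x / norm (y - x))"
proof -
  let ?N = "restrict_space lebesgue \<Omega>"
  let ?f = "\<lambda>v y. force \<Omega> J \<epsilon> gp mu rL L t y x v"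
  have fu: "integrable ?N (?f u)" and fw: "integrable ?N (?f w)"
    using integrable_force assms by auto
  have "norm (Leps \<Omega> J \<epsilon> gp mu rL L u t x - Leps \<Omega> J \<epsilon> gp mu rL L w t x)
      = norm (integral\<^sup>L ?N (\<lambda>y. ?f u y - ?f w y))"
    unfolding Leps_def set_integral_eq_integral_restrict Bochner_Integration.integral_diff[OF fu fw]
    by (simp add: norm_minus_commute)
  also have "\<dots> \<le> integral\<^sup>L ?N (\<lambda>y. 2 * (2 * mu + K) * D * (rho \<Omega> J \<epsilon> y x / norm (y - x)))"
    using fu fw assms norm_force_diff_le[OF u w _ assms(4,5) diff]
    by (intro Bochner_Integration.integral_norm_bound_integral integrable_mult_right
        integrable_rho_div_norm) auto
  also have "\<dots> = 2 * (2 * mu + K) * D * set_lebesgue_integral lebesgue \<Omega> (\<lambda>y. rho \<Omega> J \<epsilon> y x / norm (y - x))"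
    unfolding set_integral_eq_integral_restrict by (rule integral_mult_right_zero)
  finally show ?thesis .
qed

end

lemma bond_modelI:
  fixes \<Omega> :: "'a::euclidean_space set"
  assumes "open \<Omega>" "0 < \<epsilon>" "0 < L" "0 < mu" "0 < rL"
    and J_pos: "\<forall>r. 0 \<le> r \<and> r < 1 \<longrightarrow> J r > 0"
    and J_dec: "\<forall>r s. 0 \<le> r \<and> r \<le> s \<and> s < 1 \<longrightarrow> J s \<le> J r"
    and J_zero: "\<forall>r. r \<ge> 1 \<longrightarrow> J r = 0"
    and "\<forall>r. 0 \<le> r \<and> r \<le> rL \<longrightarrow> gp r = mu * r"
    and "\<forall>r. r \<ge> 0 \<longrightarrow> 0 \<le> gp r \<and> gp r \<le> mu * r"
    and lip: "\<forall>r s. 0 \<le> r \<and> 0 \<le> s \<longrightarrow> \<bar>gp r - gp s\<bar> \<le> K * \<bar>r - s\<bar>"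
  shows "bond_model \<Omega> J \<epsilon> gp mu rL L K"
proof -
  have J_nonneg: "0 \<le> J r" if "0 \<le> r" for r
    using J_pos J_zero that by (cases "r < 1") (auto intro: less_imp_le)
  have "J s \<le> J r" if "0 \<le> r" "r \<le> s" for r s
    using J_dec J_zero J_nonneg[of r] that by (cases "s < 1") (auto simp: not_less)
  then have "antimono_on {0..} J"
    by (intro monotone_onI) auto
  moreover have "K-lipschitz_on {0..} gp"
    using lip lip[rule_format, of 0 1] by (intro lipschitz_onI) (auto simp: dist_real_def)
  ultimately show ?thesis
    using assms J_nonneg by unfold_locales (auto simp: borel_open)
qed

theorem mainTheorem3:
  fixes \<Omega> :: "'a::euclidean_space set" and J gp :: "real \<Rightarrow> real"
    and \<epsilon> L mu rL rC rF T :: real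
  assumes dim: "DIM('a) \<in> {2, 3}"
    and dom: "open \<Omega>" "connected \<Omega>" "bounded \<Omega>" "\<Omega> \<noteq> {}"
    and pars: "\<epsilon> > 0" "L > 0" "mu > 0"
    and J_pos: "\<forall>r. 0 \<le> r \<and> r < 1 \<longrightarrow> J r > 0"
    and J_dec: "\<forall>r s. 0 \<le> r \<and> r \<le> s \<and> s < 1 \<longrightarrow> J s \<le> J r"
    and J_zero: "\<forall>r. r \<ge> 1 \<longrightarrow> J r = 0"
    and radii: "0 < rL" "rL \<le> rC" "rC < rF"
    and g_lin: "\<forall>r. 0 \<le> r \<and> r \<le> rL \<longrightarrow> gp r = mu * r"
    and g_zero: "\<forall>r. r \<ge> rF \<longrightarrow> gp r = 0"
    and g_bounds: "\<forall>r. r \<ge> 0 \<longrightarrow> 0 \<le> gp r \<and> gp r \<le> mu * r"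
    and g_harden: "\<forall>r s. 0 \<le> r \<and> r \<le> s \<and> s \<le> rC \<longrightarrow> gp r \<le> gp s"
    and g_soften: "\<forall>r s. rC \<le> r \<and> r \<le> s \<and> s \<le> rF \<longrightarrow> gp s \<le> gp r"
    and g_lip: "\<exists>K. \<forall>r s. 0 \<le> r \<and> 0 \<le> s \<longrightarrow> \<bar>gp r - gp s\<bar> \<le> K * \<bar>r - s\<bar>"
    and T_pos: "T > 0"
  shows "\<exists>C. \<forall>u w. in_CX \<Omega> T u \<longrightarrow> in_CX \<Omega> T w \<longrightarrow>
           (\<forall>t\<in>{0..T}. \<forall>x\<in>\<Omega>.
              norm (Leps \<Omega> J \<epsilon> gp mu rL L u t x - Leps \<Omega> J \<epsilon> gp mu rL L w t x)
              \<le> C * CXnorm \<Omega> T (\<lambda>t x. u t x - w t x)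
                  * set_lebesgue_integral lebesgue \<Omega> (\<lambda>y. rho \<Omega> J \<epsilon> y x / norm (y - x)))"
proof -
  obtain K where "\<forall>r s. 0 \<le> r \<and> 0 \<le> s \<longrightarrow> \<bar>gp r - gp s\<bar> \<le> K * \<bar>r - s\<bar>"
    using g_lip by blast
  \<comment> \<open>Of the failure envelope only its Lipschitz constant, the linear branch and 0 <= g' r <= mu r
    matter.\<close>
  then interpret bond_model \<Omega> J \<epsilon> gp mu rL L K
    using dom(1) pars radii(1) J_pos J_dec J_zero g_lin g_bounds by (intro bond_modelI)
  show ?thesis
  proof (intro exI[of _ "2 * (2 * mu + K)"] allI impI ballI)
    fix u w t x assume u: "in_CX \<Omega> T u" and w: "in_CX \<Omega> T w" and "t \<in> {0..T}" "x \<in> \<Omega>"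
    obtain Bu Bw where "\<forall>t\<in>{0..T}. \<forall>z\<in>\<Omega>. norm (u t z) \<le> Bu" "\<forall>t\<in>{0..T}. \<forall>z\<in>\<Omega>. norm (w t z) \<le> Bw"
      using in_CX_bounded[OF u] in_CX_bounded[OF w] by metis
    then have "\<forall>\<tau>\<in>{0..T}. \<forall>z\<in>\<Omega>. norm (u \<tau> z - w \<tau> z) \<le> Bu + Bw"
      by (smt (verit) norm_triangle_ineq4)
    then have "\<forall>\<tau>\<in>{0..T}. \<forall>z\<in>\<Omega>. norm (u \<tau> z - w \<tau> z) \<le> CXnorm \<Omega> T (\<lambda>t x. u t x - w t x)"
      using norm_le_CXnorm[of T \<Omega> "\<lambda>t x. u t x - w t x"] by blast
    then show "norm (Leps \<Omega> J \<epsilon> gp mu rL L u t x - Leps \<Omega> J \<epsilon> gp mu rL L w t x)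
        \<le> 2 * (2 * mu + K) * CXnorm \<Omega> T (\<lambda>t x. u t x - w t x)
          * set_lebesgue_integral lebesgue \<Omega> (\<lambda>y. rho \<Omega> J \<epsilon> y x / norm (y - x))"
      using dim \<open>t \<in> {0..T}\<close> \<open>x \<in> \<Omega>\<close> by (intro norm_Leps_diff_le[OF _ u w]) auto
  qed
qed

end
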